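(* Let $T$ be a complete first-order theory with monster model $\mathcal{U}$, let $A\subseteq\mathcal{U}$ be small, and let $p\in S_x(\mathcal{U})$, $q\in S_y(\mathcal{U})$ be global types. If $p\geq_{D,A} q$, then $\delta_p\geq_{\mathbb{E},A}\delta_q$.
   Context: "Small" means of cardinality less than the saturation of $\mathcal{U}$; $x,y$ are disjoint finite tuples of variables. For $B\subseteq\mathcal{U}$, $\mathcal{L}_x(B)$ is the Boolean algebra of formulas in free variables $x$ with parameters from $B$ modulo $T$-equivalence (identified with $B$-definable subsets of $\mathcal{U}^x$), and $\mathcal{L}_x(B)$ is identified with a subalgebra of $\mathcal{L}_{xy}(B)$ via $\varphi(x)\mapsto\varphi(x)\wedge y=y$. A Keisler measure over $B$ in $x$ is a finitely additive probability measure on $\mathcal{L}_x(B)$; $\mathfrak{M}_x(B)$ is the set of these. For $\omega\in\mathfrak{M}_{xy}(B)$, $\pi_x(\omega)\in\mathfrak{M}_x(B)$ is $\pi_x(\omega)(\varphi(x))=\omega(\varphi(x)\wedge y=y)$ (similarly $\pi_y$), and $\omega|_{C}$ denotes restriction to $\mathcal{L}_{xy}(C)$ for $C\subseteq B$. For $p\in S_x(B)$, $\delta_p$ is the Dirac measure: $\delta_p(\varphi)=1$ if $\varphi\in p$ and $0$ otherwise. Domination of types: $p\geq_{D,A}q$ means there is $r\in S_{xy}(A)$ with $p|_A\subseteq r$ and $p\cup r\vdash q$. Extension space: for $\mu\in\mathfrak{M}_x(\mathcal{U})$ and $\lambda\in\mathfrak{M}_{xy}(A)$ with $\mu|_A=\pi_x(\lambda)$,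 $\operatorname{E}(\lambda,\mu)=\{\omega\in\mathfrak{M}_{xy}(\mathcal{U}):\omega|_A=\lambda,\ \pi_x(\omega)=\mu\}$. Extension domination: for $\mu\in\mathfrak{M}_x(\mathcal{U})$, $\nu\in\mathfrak{M}_y(\mathcal{U})$, $\mu\geq_{\mathbb{E},A}\nu$ means there is $\lambda\in\mathfrak{M}_{xy}(A)$ with $\pi_x(\lambda)=\mu|_A$ such that $\pi_y(\omega)=\nu$ for every $\omega\in\operatorname{E}(\lambda,\mu)$. *)

theory Defs
  imports Complex_Main "HOL-Library.FuncSet"
begin

text \<open>Terms and formulas over function symbols 'f, relation symbols 'r, variables nat,
  with parameters (constants naming elements) of type 'u.\<close>

datatype ('f, 'u) trm = Var nat | Par 'u | Fn 'f "('f, 'u) trm list"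

datatype ('f, 'r, 'u) fm =
    Eq "('f, 'u) trm" "('f, 'u) trm"
  | Rel 'r "('f, 'u) trm list"
  | Neg "('f, 'r, 'u) fm"
  | Conj "('f, 'r, 'u) fm" "('f, 'r, 'u) fm"
  | Ex nat "('f, 'r, 'u) fm"

fun fvt :: "('f, 'u) trm \<Rightarrow> nat set" where
  "fvt (Var n) = {n}"
| "fvt (Par u) = {}"
| "fvt (Fn f ts) = (\<Union>t\<in>set ts. fvt t)"

fun fv :: "('f, 'r, 'u) fm \<Rightarrow> nat set" where
  "fv (Eq s t) = fvt s \<union> fvt t"
| "fv (Rel R ts) = (\<Union>t\<in>set ts. fvt t)"
| "fv (Neg \<phi>) = fv \<phi>"
| "fv (Conj \<phi> \<psi>) = fv \<phi> \<union> fv \<psi>"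
| "fv (Ex n \<phi>) = fv \<phi> - {n}"

abbreviation params :: "('f, 'r, 'u) fm \<Rightarrow> 'u set" where
  "params \<phi> \<equiv> set3_fm \<phi>"

record ('f, 'r, 'u) struc =
  univ :: "'u set"
  fint :: "'f \<Rightarrow> 'u list \<Rightarrow> 'u"
  rint :: "'r \<Rightarrow> 'u list \<Rightarrow> bool"

definition is_struc :: "('f, 'r, 'u, 'z) struc_scheme \<Rightarrow> bool" where
  "is_struc M \<longleftrightarrow> univ M \<noteq> {} \<and> (\<forall>f us. set us \<subseteq> univ M \<longrightarrow> fint M f us \<in> univ M)"

fun evalt :: "('f, 'r, 'u, 'z) struc_scheme \<Rightarrow> (nat \<Rightarrow> 'u) \<Rightarrow> ('f, 'u) trm \<Rightarrow> 'u" where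
  "evalt M e (Var n) = e n"
| "evalt M e (Par u) = u"
| "evalt M e (Fn f ts) = fint M f (map (evalt M e) ts)"

fun sat :: "('f, 'r, 'u, 'z) struc_scheme \<Rightarrow> (nat \<Rightarrow> 'u) \<Rightarrow> ('f, 'r, 'u) fm \<Rightarrow> bool" where
  "sat M e (Eq s t) = (evalt M e s = evalt M e t)"
| "sat M e (Rel R ts) = rint M R (map (evalt M e) ts)"
| "sat M e (Neg \<phi>) = (\<not> sat M e \<phi>)"
| "sat M e (Conj \<phi> \<psi>) = (sat M e \<phi> \<and> sat M e \<psi>)"
| "sat M e (Ex n \<phi>) = (\<exists>b\<in>univ M. sat M (e(n := b)) \<phi>)"

text \<open>A tuple of variables is a finite set X of variable names; U^X is the set of extensional maps X to univ M.\<close>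

definition dset :: "('f, 'r, 'u, 'z) struc_scheme \<Rightarrow> nat set \<Rightarrow> ('f, 'r, 'u) fm \<Rightarrow> (nat \<Rightarrow> 'u) set" where
  "dset M X \<phi> = {a \<in> X \<rightarrow>\<^sub>E univ M. sat M a \<phi>}"

text \<open>L_X(B): B-definable subsets of U^X (formulas in free variables X with parameters in B,
  modulo equivalence in the monster model).\<close>
definition LL :: "('f, 'r, 'u, 'z) struc_scheme \<Rightarrow> nat set \<Rightarrow> 'u set \<Rightarrow> (nat \<Rightarrow> 'u) set set" where
  "LL M X B = {dset M X \<phi> | \<phi>. fv \<phi> \<subseteq> X \<and> params \<phi> \<subseteq> B}"

text \<open>Identification of L_X(B) inside L_Z(B) for X \<subseteq> Z: \<phi>(x) maps to \<phi>(x) \<and> y = y.\<close>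
definition liftto :: "('f, 'r, 'u, 'z) struc_scheme \<Rightarrow> nat set \<Rightarrow> nat set \<Rightarrow> (nat \<Rightarrow> 'u) set \<Rightarrow> (nat \<Rightarrow> 'u) set" where
  "liftto M Z X D = {a \<in> Z \<rightarrow>\<^sub>E univ M. restrict a X \<in> D}"

text \<open>Complete types over B in variables X: ultrafilters of L_X(B) (maximal consistent sets
  of formulas modulo equivalence; consistency = finite satisfiability in the monster).\<close>
definition complete_type :: "('f, 'r, 'u, 'z) struc_scheme \<Rightarrow> nat set \<Rightarrow> 'u set \<Rightarrow> (nat \<Rightarrow> 'u) set set \<Rightarrow> bool" where
  "complete_type M X B p \<longleftrightarrow>
     p \<subseteq> LL M X B \<and> {} \<notin> p \<and> (X \<rightarrow>\<^sub>E univ M) \<in> p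
     \<and> (\<forall>D\<in>p. \<forall>E\<in>p. D \<inter> E \<in> p)
     \<and> (\<forall>D\<in>p. \<forall>E\<in>LL M X B. D \<subseteq> E \<longrightarrow> E \<in> p)
     \<and> (\<forall>D\<in>LL M X B. D \<in> p \<or> (X \<rightarrow>\<^sub>E univ M) - D \<in> p)"

definition realized :: "('f, 'r, 'u, 'z) struc_scheme \<Rightarrow> nat set \<Rightarrow> (nat \<Rightarrow> 'u) set set \<Rightarrow> bool" where
  "realized M X p \<longleftrightarrow> (\<exists>a \<in> X \<rightarrow>\<^sub>E univ M. \<forall>D\<in>p. a \<in> D)"

text \<open>"B is small w.r.t. K": |B| < |K|, i.e. there is no injection of K into B.\<close>
definition small :: "'k set \<Rightarrow> 'u set \<Rightarrow> bool" where
  "small K B \<longleftrightarrow> \<not> (\<exists>f. inj_on f K \<and> f ` K \<subseteq> B)"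

definition saturated :: "('f, 'r, 'u, 'z) struc_scheme \<Rightarrow> 'k set \<Rightarrow> bool" where
  "saturated M K \<longleftrightarrow> (\<forall>B X p. B \<subseteq> univ M \<and> small K B \<and> finite X \<and> complete_type M X B p
       \<longrightarrow> realized M X p)"

definition automorphism :: "('f, 'r, 'u, 'z) struc_scheme \<Rightarrow> ('u \<Rightarrow> 'u) \<Rightarrow> bool" where
  "automorphism M \<sigma> \<longleftrightarrow> bij_betw \<sigma> (univ M) (univ M)
     \<and> (\<forall>f us. set us \<subseteq> univ M \<longrightarrow> \<sigma> (fint M f us) = fint M f (map \<sigma> us))
     \<and> (\<forall>R us. set us \<subseteq> univ M \<longrightarrow> (rint M R (map \<sigma> us) \<longleftrightarrow> rint M R us))"

definition elementary_on :: "('f, 'r, 'u, 'z) struc_scheme \<Rightarrow> 'u set \<Rightarrow> ('u \<Rightarrow> 'u) \<Rightarrow> bool" where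
  "elementary_on M B g \<longleftrightarrow> g ` B \<subseteq> univ M \<and>
     (\<forall>\<phi> e. fv \<phi> = {} \<and> params \<phi> \<subseteq> B \<longrightarrow> (sat M e \<phi> \<longleftrightarrow> sat M e (map_fm id id g \<phi>)))"

definition strongly_homogeneous :: "('f, 'r, 'u, 'z) struc_scheme \<Rightarrow> 'k set \<Rightarrow> bool" where
  "strongly_homogeneous M K \<longleftrightarrow> (\<forall>B g. B \<subseteq> univ M \<and> small K B \<and> elementary_on M B g
      \<longrightarrow> (\<exists>\<sigma>. automorphism M \<sigma> \<and> (\<forall>b\<in>B. \<sigma> b = g b)))"

text \<open>Monster model of the complete theory T = Th(M), with saturation index K.\<close>
definition monster :: "('f, 'r, 'u, 'z) struc_scheme \<Rightarrow> 'k set \<Rightarrow> bool" where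
  "monster M K \<longleftrightarrow> is_struc M \<and> infinite K \<and> saturated M K \<and> strongly_homogeneous M K"

definition keisler :: "('f, 'r, 'u, 'z) struc_scheme \<Rightarrow> nat set \<Rightarrow> 'u set \<Rightarrow> ((nat \<Rightarrow> 'u) set \<Rightarrow> real) \<Rightarrow> bool" where
  "keisler M X B \<mu> \<longleftrightarrow> (\<forall>D\<in>LL M X B. 0 \<le> \<mu> D) \<and> \<mu> (X \<rightarrow>\<^sub>E univ M) = 1
     \<and> (\<forall>D\<in>LL M X B. \<forall>E\<in>LL M X B. D \<inter> E = {} \<longrightarrow> \<mu> (D \<union> E) = \<mu> D + \<mu> E)"

text \<open>Equality of measures as measures on L_X(B) (values outside L_X(B) are irrelevant);
  in particular meq M X C \<omega> \<lambda> expresses \<omega>|_C = \<lambda>.\<close>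
definition meq :: "('f, 'r, 'u, 'z) struc_scheme \<Rightarrow> nat set \<Rightarrow> 'u set \<Rightarrow> ((nat \<Rightarrow> 'u) set \<Rightarrow> real) \<Rightarrow> ((nat \<Rightarrow> 'u) set \<Rightarrow> real) \<Rightarrow> bool" where
  "meq M X B \<mu> \<nu> \<longleftrightarrow> (\<forall>D\<in>LL M X B. \<mu> D = \<nu> D)"

definition marg :: "('f, 'r, 'u, 'z) struc_scheme \<Rightarrow> nat set \<Rightarrow> nat set \<Rightarrow> ((nat \<Rightarrow> 'u) set \<Rightarrow> real) \<Rightarrow> ((nat \<Rightarrow> 'u) set \<Rightarrow> real)" where
  "marg M Z X \<omega> = (\<lambda>D. \<omega> (liftto M Z X D))"

definition dirac :: "(nat \<Rightarrow> 'u) set set \<Rightarrow> ((nat \<Rightarrow> 'u) set \<Rightarrow> real)" where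
  "dirac p = (\<lambda>D. if D \<in> p then 1 else 0)"

text \<open>p \<ge>_{D,A} q: some r \<in> S_xy(A) with p|_A \<subseteq> r and p \<union> r \<turnstile> q. Since p, r are closed under
  finite conjunction, p \<union> r \<turnstile> \<psi> means (by compactness, in the monster) that some \<phi> \<in> p and
  \<theta> \<in> r satisfy \<phi> \<and> \<theta> \<rightarrow> \<psi>.\<close>
definition dom_D :: "('f, 'r, 'u, 'z) struc_scheme \<Rightarrow> nat set \<Rightarrow> nat set \<Rightarrow> 'u set
     \<Rightarrow> (nat \<Rightarrow> 'u) set set \<Rightarrow> (nat \<Rightarrow> 'u) set set \<Rightarrow> bool" where
  "dom_D M X Y A p q \<longleftrightarrow> (\<exists>r. complete_type M (X \<union> Y) A r
     \<and> (\<forall>D \<in> p \<inter> LL M X A. liftto M (X \<union> Y) X D \<in> r)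
     \<and> (\<forall>\<psi>\<in>q. \<exists>\<phi>\<in>p. \<exists>\<theta>\<in>r. liftto M (X \<union> Y) X \<phi> \<inter> \<theta> \<subseteq> liftto M (X \<union> Y) Y \<psi>))"

definition dom_E :: "('f, 'r, 'u, 'z) struc_scheme \<Rightarrow> nat set \<Rightarrow> nat set \<Rightarrow> 'u set
     \<Rightarrow> ((nat \<Rightarrow> 'u) set \<Rightarrow> real) \<Rightarrow> ((nat \<Rightarrow> 'u) set \<Rightarrow> real) \<Rightarrow> bool" where
  "dom_E M X Y A \<mu> \<nu> \<longleftrightarrow> (\<exists>lam. keisler M (X \<union> Y) A lam
     \<and> meq M X A (marg M (X \<union> Y) X lam) \<mu>
     \<and> (\<forall>\<omega>. keisler M (X \<union> Y) (univ M) \<omega> \<and> meq M (X \<union> Y) A \<omega> lam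
              \<and> meq M X (univ M) (marg M (X \<union> Y) X \<omega>) \<mu>
           \<longrightarrow> meq M Y (univ M) (marg M (X \<union> Y) Y \<omega>) \<nu>))"

end

theory Submission
  imports Defs
begin

text \<open>Take \<open>\<lambda> = \<delta>\<^sub>r\<close> for the type \<open>r\<close> witnessing \<open>p \<ge>\<^sub>D\<^sub>,\<^sub>A q\<close>. If \<open>\<omega>\<close> extends \<open>\<delta>\<^sub>r\<close> and has
  \<open>x\<close>-marginal \<open>\<delta>\<^sub>p\<close>, then for every \<open>\<psi> \<in> q\<close> there are \<open>\<phi> \<in> p\<close> and \<open>\<theta> \<in> r\<close> with
  \<open>\<phi> \<and> \<theta> \<rightarrow> \<psi>\<close>; both conjuncts have \<open>\<omega>\<close>-measure 1, hence so has \<open>\<psi>\<close>. A Keisler measure that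
  gives measure 1 to every formula of a complete type is the Dirac measure of that type, so the
  \<open>y\<close>-marginal of \<open>\<omega>\<close> is \<open>\<delta>\<^sub>q\<close>.\<close>

lemma evalt_cong: "\<forall>n\<in>fvt t. e n = e' n \<Longrightarrow> evalt M e t = evalt M e' t"
  by (induction t) (auto cong: map_cong)

lemma sat_cong: "\<forall>n\<in>fv \<phi>. e n = e' n \<Longrightarrow> sat M e \<phi> = sat M e' \<phi>"
proof (induction \<phi> arbitrary: e e')
  case (Eq s t)
  then show ?case using evalt_cong[of s e e' M] evalt_cong[of t e e' M] by auto
next
  case (Rel R ts)
  then have "map (evalt M e) ts = map (evalt M e') ts"
    by (auto intro!: map_cong evalt_cong)
  then show ?case by (metis sat.simps(2))
next
  case (Ex n \<phi>)
  then have "sat M (e(n := b)) \<phi> = sat M (e'(n := b)) \<phi>" for b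
    by (intro Ex.IH) auto
  then show ?case by simp
next
  case (Conj \<phi> \<psi>)
  have "sat M e \<phi> = sat M e' \<phi>" by (rule Conj.IH(1)) (use Conj.prems in simp)
  moreover have "sat M e \<psi> = sat M e' \<psi>" by (rule Conj.IH(2)) (use Conj.prems in simp)
  ultimately show ?case by simp
qed simp

lemma dset_in_LL: "fv \<phi> \<subseteq> Z \<Longrightarrow> params \<phi> \<subseteq> B \<Longrightarrow> dset M Z \<phi> \<in> LL M Z B"
  unfolding LL_def by blast

lemma LL_subset_PiE: "D \<in> LL M Z B \<Longrightarrow> D \<subseteq> Z \<rightarrow>\<^sub>E univ M"
  unfolding LL_def dset_def by auto

lemma PiE_in_LL: "(Z \<rightarrow>\<^sub>E univ M) \<in> LL M Z B"
proof -
  let ?t = "Fn undefined []"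
  have "dset M Z (Eq ?t ?t) = Z \<rightarrow>\<^sub>E univ M" unfolding dset_def by auto
  then show ?thesis using dset_in_LL[of "Eq ?t ?t" Z B M] by simp
qed

lemma LL_Diff: "D \<in> LL M Z B \<Longrightarrow> (Z \<rightarrow>\<^sub>E univ M) - D \<in> LL M Z B"
proof -
  assume "D \<in> LL M Z B"
  then obtain \<phi> where "D = dset M Z \<phi>" "fv \<phi> \<subseteq> Z" "params \<phi> \<subseteq> B"
    unfolding LL_def by auto
  moreover have "dset M Z (Neg \<phi>) = (Z \<rightarrow>\<^sub>E univ M) - dset M Z \<phi>"
    unfolding dset_def by auto
  ultimately show ?thesis using dset_in_LL[of "Neg \<phi>" Z B M] by simp
qed

lemma LL_Int: "D \<in> LL M Z B \<Longrightarrow> E \<in> LL M Z B \<Longrightarrow> D \<inter> E \<in> LL M Z B"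
proof -
  assume "D \<in> LL M Z B" "E \<in> LL M Z B"
  then obtain \<phi> \<psi> where "D = dset M Z \<phi>" "fv \<phi> \<subseteq> Z" "params \<phi> \<subseteq> B"
    and "E = dset M Z \<psi>" "fv \<psi> \<subseteq> Z" "params \<psi> \<subseteq> B"
    unfolding LL_def by auto
  moreover have "dset M Z (Conj \<phi> \<psi>) = dset M Z \<phi> \<inter> dset M Z \<psi>"
    unfolding dset_def by auto
  ultimately show ?thesis using dset_in_LL[of "Conj \<phi> \<psi>" Z B M] by simp
qed

lemma LL_Un: "D \<in> LL M Z B \<Longrightarrow> E \<in> LL M Z B \<Longrightarrow> D \<union> E \<in> LL M Z B"
proof -
  assume D: "D \<in> LL M Z B" and E: "E \<in> LL M Z B"
  let ?F = "Z \<rightarrow>\<^sub>E univ M"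
  have "D \<union> E = ?F - ((?F - D) \<inter> (?F - E))"
    using LL_subset_PiE[OF D] LL_subset_PiE[OF E] by auto
  then show ?thesis using D E LL_Diff LL_Int by metis
qed

lemma LL_mono: "B \<subseteq> B' \<Longrightarrow> LL M Z B \<subseteq> LL M Z B'"
  unfolding LL_def by blast

lemma liftto_in_LL:
  assumes "X \<subseteq> Z" and "D \<in> LL M X B"
  shows "liftto M Z X D \<in> LL M Z B"
proof -
  obtain \<phi> where D: "D = dset M X \<phi>" "fv \<phi> \<subseteq> X" "params \<phi> \<subseteq> B"
    using assms(2) unfolding LL_def by auto
  have "sat M (restrict a X) \<phi> = sat M a \<phi>" for a
    using D(2) by (intro sat_cong) auto
  then have "liftto M Z X D = dset M Z \<phi>"
    using assms(1) unfolding liftto_def D dset_def by auto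
  with D assms(1) show ?thesis using dset_in_LL[of \<phi> Z B M] by auto
qed

lemma liftto_PiE: "X \<subseteq> Z \<Longrightarrow> liftto M Z X (X \<rightarrow>\<^sub>E univ M) = Z \<rightarrow>\<^sub>E univ M"
  unfolding liftto_def by auto

lemma liftto_Int: "liftto M Z X (D \<inter> E) = liftto M Z X D \<inter> liftto M Z X E"
  unfolding liftto_def by auto

lemma liftto_Un: "liftto M Z X (D \<union> E) = liftto M Z X D \<union> liftto M Z X E"
  unfolding liftto_def by auto

lemma liftto_empty: "liftto M Z X {} = {}"
  unfolding liftto_def by auto

lemma keisler_nonneg: "keisler M Z B w \<Longrightarrow> D \<in> LL M Z B \<Longrightarrow> 0 \<le> w D"
  unfolding keisler_def by blast

lemma keisler_additive:
  "keisler M Z B w \<Longrightarrow> D \<in> LL M Z B \<Longrightarrow> E \<in> LL M Z B \<Longrightarrow> D \<inter> E = {}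
    \<Longrightarrow> w (D \<union> E) = w D + w E"
  unfolding keisler_def by blast

lemma keisler_Diff:
  assumes w: "keisler M Z B w" and D: "D \<in> LL M Z B"
  shows "w ((Z \<rightarrow>\<^sub>E univ M) - D) = 1 - w D"
proof -
  have "D \<union> ((Z \<rightarrow>\<^sub>E univ M) - D) = Z \<rightarrow>\<^sub>E univ M"
    using LL_subset_PiE[OF D] by auto
  then have "1 = w D + w ((Z \<rightarrow>\<^sub>E univ M) - D)"
    using keisler_additive[OF w D LL_Diff[OF D]] w unfolding keisler_def by auto
  then show ?thesis by linarith
qed

lemma keisler_mono:
  assumes w: "keisler M Z B w" and D: "D \<in> LL M Z B" and E: "E \<in> LL M Z B" and "D \<subseteq> E"
  shows "w D \<le> w E"
proof -
  let ?R = "E \<inter> ((Z \<rightarrow>\<^sub>E univ M) - D)"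
  have R: "?R \<in> LL M Z B" using LL_Int LL_Diff D E by blast
  have "E = D \<union> ?R" using \<open>D \<subseteq> E\<close> LL_subset_PiE[OF E] by auto
  then have "w E = w D + w ?R" using keisler_additive[OF w D R] by auto
  then show ?thesis using keisler_nonneg[OF w R] by linarith
qed

lemma keisler_le_1: "keisler M Z B w \<Longrightarrow> D \<in> LL M Z B \<Longrightarrow> w D \<le> 1"
  using keisler_mono[OF _ _ PiE_in_LL LL_subset_PiE] unfolding keisler_def by metis

lemma keisler_Int_eq_1:
  assumes w: "keisler M Z B w" and S: "S \<in> LL M Z B" and T: "T \<in> LL M Z B"
    and "w S = 1" and "w T = 1"
  shows "w (S \<inter> T) = 1"
proof -
  let ?C = "(Z \<rightarrow>\<^sub>E univ M) - T"
  have C: "?C \<in> LL M Z B" using LL_Diff T by blast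
  have SC: "S \<inter> ?C \<in> LL M Z B" using LL_Int S C by blast
  have "S = (S \<inter> T) \<union> (S \<inter> ?C)" using LL_subset_PiE[OF S] by auto
  then have "w S = w (S \<inter> T) + w (S \<inter> ?C)"
    using keisler_additive[OF w LL_Int[OF S T] SC] by auto
  moreover have "w (S \<inter> ?C) \<le> w ?C" using keisler_mono[OF w SC C] by auto
  moreover have "w ?C = 0" using keisler_Diff[OF w T] \<open>w T = 1\<close> by simp
  moreover have "w (S \<inter> ?C) \<ge> 0" using keisler_nonneg[OF w SC] .
  ultimately show ?thesis using \<open>w S = 1\<close> by linarith
qed

lemma keisler_eq_1_if_Int_subset:
  assumes w: "keisler M Z B w" and D: "D \<in> LL M Z B" and E: "E \<in> LL M Z B" and F: "F \<in> LL M Z B"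
    and "w D = 1" and "w E = 1" and "D \<inter> E \<subseteq> F"
  shows "w F = 1"
  using keisler_Int_eq_1[OF w D E] keisler_mono[OF w LL_Int[OF D E] F] keisler_le_1[OF w F] assms
  by fastforce

lemma keisler_marg:
  assumes "X \<subseteq> Z" and w: "keisler M Z B w"
  shows "keisler M X B (marg M Z X w)"
  unfolding keisler_def marg_def
proof (intro conjI ballI impI)
  fix D E assume D: "D \<in> LL M X B" and E: "E \<in> LL M X B" and "D \<inter> E = {}"
  then have "liftto M Z X D \<inter> liftto M Z X E = {}"
    by (metis liftto_Int liftto_empty)
  then show "w (liftto M Z X (D \<union> E)) = w (liftto M Z X D) + w (liftto M Z X E)"
    using keisler_additive[OF w liftto_in_LL[OF assms(1) D] liftto_in_LL[OF assms(1) E]]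
    by (simp add: liftto_Un)
next
  show "w (liftto M Z X (X \<rightarrow>\<^sub>E univ M)) = 1"
    using w unfolding liftto_PiE[OF assms(1)] keisler_def by blast
qed (use assms liftto_in_LL keisler_nonneg in blast)

lemma complete_type_subset_LL: "complete_type M Z B p \<Longrightarrow> p \<subseteq> LL M Z B"
  unfolding complete_type_def by blast

lemma complete_type_Int: "complete_type M Z B p \<Longrightarrow> D \<in> p \<Longrightarrow> E \<in> p \<Longrightarrow> D \<inter> E \<in> p"
  unfolding complete_type_def by blast

lemma complete_type_upward:
  "complete_type M Z B p \<Longrightarrow> D \<in> p \<Longrightarrow> E \<in> LL M Z B \<Longrightarrow> D \<subseteq> E \<Longrightarrow> E \<in> p"
  unfolding complete_type_def by blast

lemma complete_type_Diff_iff: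
  assumes p: "complete_type M Z B p" and D: "D \<in> LL M Z B"
  shows "(Z \<rightarrow>\<^sub>E univ M) - D \<in> p \<longleftrightarrow> D \<notin> p"
proof
  assume "(Z \<rightarrow>\<^sub>E univ M) - D \<in> p"
  moreover have "{} \<notin> p" using p unfolding complete_type_def by blast
  ultimately show "D \<notin> p" using complete_type_Int[OF p, of D] by (metis Diff_disjoint)
next
  show "D \<notin> p \<Longrightarrow> (Z \<rightarrow>\<^sub>E univ M) - D \<in> p"
    using p D unfolding complete_type_def by blast
qed

lemma complete_type_restrict:
  assumes "B' \<subseteq> B" and p: "complete_type M X B p"
  shows "complete_type M X B' (p \<inter> LL M X B')"
  unfolding complete_type_def
proof (intro conjI ballI impI)
  have L: "LL M X B' \<subseteq> LL M X B" using LL_mono[OF assms(1)] .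
  show "{} \<notin> p \<inter> LL M X B'" "(X \<rightarrow>\<^sub>E univ M) \<in> p \<inter> LL M X B'"
    using p PiE_in_LL unfolding complete_type_def by auto
  fix D assume D: "D \<in> LL M X B'"
  then show "D \<in> p \<inter> LL M X B' \<or> (X \<rightarrow>\<^sub>E univ M) - D \<in> p \<inter> LL M X B'"
    using complete_type_Diff_iff[OF p] L LL_Diff by blast
next
  fix D E assume "D \<in> p \<inter> LL M X B'" "E \<in> p \<inter> LL M X B'"
  then show "D \<inter> E \<in> p \<inter> LL M X B'" using complete_type_Int[OF p] LL_Int by blast
next
  fix D E assume "D \<in> p \<inter> LL M X B'" "E \<in> LL M X B'" "D \<subseteq> E"
  then show "E \<in> p \<inter> LL M X B'" using complete_type_upward[OF p] LL_mono[OF assms(1)] by blast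
qed simp

lemma keisler_dirac:
  assumes r: "complete_type M Z B r"
  shows "keisler M Z B (dirac r)"
  unfolding keisler_def
proof (intro conjI ballI impI)
  fix D E assume D: "D \<in> LL M Z B" and E: "E \<in> LL M Z B" and "D \<inter> E = {}"
  have DE: "D \<union> E \<in> LL M Z B" using LL_Un D E by blast
  have "\<not> (D \<in> r \<and> E \<in> r)"
    using complete_type_Diff_iff[OF r D] complete_type_upward[OF r _ LL_Diff[OF D]]
      LL_subset_PiE[OF E] \<open>D \<inter> E = {}\<close> by blast
  moreover have "D \<union> E \<in> r \<longleftrightarrow> D \<in> r \<or> E \<in> r"
  proof
    assume "D \<union> E \<in> r"
    moreover have "((Z \<rightarrow>\<^sub>E univ M) - D) \<inter> ((Z \<rightarrow>\<^sub>E univ M) - E) = (Z \<rightarrow>\<^sub>E univ M) - (D \<union> E)"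
      by auto
    ultimately show "D \<in> r \<or> E \<in> r"
      using complete_type_Diff_iff[OF r] complete_type_Int[OF r] D E DE by metis
  qed (use complete_type_upward[OF r _ DE] in blast)
  ultimately show "dirac r (D \<union> E) = dirac r D + dirac r E" unfolding dirac_def by auto
next
  have "(Z \<rightarrow>\<^sub>E univ M) \<in> r" using r unfolding complete_type_def by blast
  then show "dirac r (Z \<rightarrow>\<^sub>E univ M) = 1" unfolding dirac_def by simp
qed (simp add: dirac_def)

lemma meq_dirac_if_type_full:
  assumes w: "keisler M Z B w" and p: "complete_type M Z B p" and full: "\<And>D. D \<in> p \<Longrightarrow> w D = 1"
  shows "meq M Z B w (dirac p)"
  unfolding meq_def
proof
  fix D assume D: "D \<in> LL M Z B"
  show "w D = dirac p D"
  proof (cases "D \<in> p")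
    case False
    then have "w ((Z \<rightarrow>\<^sub>E univ M) - D) = 1" using full complete_type_Diff_iff[OF p D] by blast
    then show ?thesis using False keisler_Diff[OF w D] unfolding dirac_def by simp
  qed (simp add: full dirac_def)
qed

lemma meq_dirac_eq_1:
  "meq M Z B w (dirac p) \<Longrightarrow> complete_type M Z B p \<Longrightarrow> D \<in> p \<Longrightarrow> w D = 1"
  using complete_type_subset_LL unfolding meq_def dirac_def by fastforce

theorem proposition3p6:
  fixes M :: "('f, 'r, 'u) struc" and K :: "'k set"
    and X Y :: "nat set" and A :: "'u set" and p q :: "(nat \<Rightarrow> 'u) set set"
  assumes "monster M K"
    and "A \<subseteq> univ M" and "small K A"
    and "finite X" and "finite Y" and "X \<inter> Y = {}"
    and "complete_type M X (univ M) p" and "complete_type M Y (univ M) q"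
    and "dom_D M X Y A p q"
  shows "dom_E M X Y A (dirac p) (dirac q)"
proof -
  let ?Z = "X \<union> Y" and ?U = "univ M"
  obtain r where r: "complete_type M ?Z A r"
    and p_in_r: "\<forall>D \<in> p \<inter> LL M X A. liftto M ?Z X D \<in> r"
    and r_forces_q: "\<forall>\<psi>\<in>q. \<exists>\<phi>\<in>p. \<exists>\<theta>\<in>r. liftto M ?Z X \<phi> \<inter> \<theta> \<subseteq> liftto M ?Z Y \<psi>"
    using assms(9) unfolding dom_D_def by blast
  have "meq M X A (marg M ?Z X (dirac r)) (dirac (p \<inter> LL M X A))"
    using p_in_r
    by (intro meq_dirac_if_type_full keisler_marg keisler_dirac[OF r]
        complete_type_restrict[OF assms(2,7)]) (auto simp: marg_def dirac_def)
  then have "meq M X A (marg M ?Z X (dirac r)) (dirac p)"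
    by (simp add: meq_def dirac_def)
  moreover have "meq M Y ?U (marg M ?Z Y \<omega>) (dirac q)"
    if \<omega>: "keisler M ?Z ?U \<omega>" and \<omega>_r: "meq M ?Z A \<omega> (dirac r)"
      and \<omega>_p: "meq M X ?U (marg M ?Z X \<omega>) (dirac p)" for \<omega>
  proof (rule meq_dirac_if_type_full[OF keisler_marg[OF _ \<omega>] assms(8)])
    fix \<psi> assume "\<psi> \<in> q"
    then obtain \<phi> \<theta> where "\<phi> \<in> p" "\<theta> \<in> r"
      and \<phi>\<theta>_\<psi>: "liftto M ?Z X \<phi> \<inter> \<theta> \<subseteq> liftto M ?Z Y \<psi>"
      using r_forces_q by blast
    have \<phi>: "\<phi> \<in> LL M X ?U" and \<theta>: "\<theta> \<in> LL M ?Z A" and \<psi>: "\<psi> \<in> LL M Y ?U"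
      using complete_type_subset_LL assms(7,8) r \<open>\<phi> \<in> p\<close> \<open>\<theta> \<in> r\<close> \<open>\<psi> \<in> q\<close> by blast+
    have "\<omega> (liftto M ?Z X \<phi>) = 1"
      using meq_dirac_eq_1[OF \<omega>_p assms(7) \<open>\<phi> \<in> p\<close>] unfolding marg_def .
    moreover have "\<omega> \<theta> = 1" using meq_dirac_eq_1[OF \<omega>_r r \<open>\<theta> \<in> r\<close>] .
    ultimately show "marg M ?Z Y \<omega> \<psi> = 1"
      unfolding marg_def using keisler_eq_1_if_Int_subset[OF \<omega> liftto_in_LL[OF _ \<phi>]
        subsetD[OF LL_mono[OF assms(2)] \<theta>] liftto_in_LL[OF _ \<psi>] _ _ \<phi>\<theta>_\<psi>] by simp
  qed simp
  ultimately show ?thesis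
    unfolding dom_E_def using keisler_dirac[OF r] by blast
qed

end
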